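(* Let $\mathcal O=\mathbb R^n/\pi$ with $\pi\subset\mathrm{Iso}(\mathbb R^n)$ crystallographic, and let $Z=\mathrm Z_{\mathsf{GL}(n)}(H_\pi)$. Then the inclusion $Z\subset\mathcal C_\pi$ induces a bijection (homeomorphism) between $\mathcal T_{\mathrm{flat}}(\mathcal O)=\mathrm O(n)\backslash\mathcal C_\pi$ and the space of right cosets $(Z\cap\mathrm O(n))\backslash Z$; equivalently, $\mathcal T_{\mathrm{flat}}(\mathcal O)$ is the quotient of $Z$ by the relation $A\simeq B$ iff $B=OA$ for some $O\in\mathrm O(n)$.
   Context: $\mathrm{Iso}(\mathbb R^n)=\mathrm O(n)\ltimes\mathbb R^n$ with elements $(A,v)$, $x\mapsto Ax+v$; crystallographic means discrete with compact quotient; $H_\pi=\{A:\exists v,\ (A,v)\in\pi\}$. $\mathcal C_\pi=\{A\in\mathsf{GL}(n,\mathbb R):AH_\pi A^{-1}\subset\mathrm O(n)\}$ and $\mathcal T_{\mathrm{flat}}(\mathcal O)=\mathrm O(n)\backslash\mathcal C_\pi$ is the orbit space of left multiplication by $\mathrm O(n)$. $\mathrm Z_{\mathsf{GL}(n)}(H_\pi)$ is the centralizer of $H_\pi$ in $\mathsf{GL}(n,\mathbb R)$. *)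

theory Defs
  imports "HOL-Analysis.Analysis"
begin

text \<open>An isometry x \<mapsto> A x + v is represented by the pair (A, v), with A orthogonal.\<close>

definition Iso :: "((real^'n^'n) \<times> (real^'n)) set" where
  "Iso = {(A, v). orthogonal_matrix A}"

definition iso_act :: "(real^'n^'n) \<times> (real^'n) \<Rightarrow> real^'n \<Rightarrow> real^'n" where
  "iso_act g x = fst g *v x + snd g"

definition iso_comp :: "(real^'n^'n) \<times> (real^'n) \<Rightarrow> (real^'n^'n) \<times> (real^'n) \<Rightarrow> (real^'n^'n) \<times> (real^'n)" where
  "iso_comp g h = (fst g ** fst h, fst g *v snd h + snd g)"

definition iso_inv :: "(real^'n^'n) \<times> (real^'n) \<Rightarrow> (real^'n^'n) \<times> (real^'n)" where
  "iso_inv g = (transpose (fst g), - (transpose (fst g) *v snd g))"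

definition iso_subgroup :: "((real^'n^'n) \<times> (real^'n)) set \<Rightarrow> bool" where
  "iso_subgroup \<pi> \<longleftrightarrow> \<pi> \<subseteq> Iso \<and> (mat 1, 0) \<in> \<pi> \<and>
     (\<forall>g\<in>\<pi>. \<forall>h\<in>\<pi>. iso_comp g h \<in> \<pi>) \<and> (\<forall>g\<in>\<pi>. iso_inv g \<in> \<pi>)"

text \<open>Discrete subgroup of Iso(R^n) (topology of O(n) \<times> R^n) with compact quotient R^n / \<pi>.\<close>

definition crystallographic :: "((real^'n^'n) \<times> (real^'n)) set \<Rightarrow> bool" where
  "crystallographic \<pi> \<longleftrightarrow> iso_subgroup \<pi> \<and>
     (\<forall>g\<in>\<pi>. \<exists>e>0. \<forall>h\<in>\<pi>. dist h g < e \<longrightarrow> h = g) \<and>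
     (\<exists>K. compact K \<and> (\<forall>x. \<exists>g\<in>\<pi>. \<exists>y\<in>K. x = iso_act g y))"

definition Ortho :: "(real^'n^'n) set" where
  "Ortho = {Q. orthogonal_matrix Q}"

definition GL :: "(real^'n^'n) set" where
  "GL = {A. invertible A}"

definition Hpi :: "((real^'n^'n) \<times> (real^'n)) set \<Rightarrow> (real^'n^'n) set" where
  "Hpi \<pi> = {A. \<exists>v. (A, v) \<in> \<pi>}"

definition Cpi :: "((real^'n^'n) \<times> (real^'n)) set \<Rightarrow> (real^'n^'n) set" where
  "Cpi \<pi> = {A \<in> GL. \<forall>h\<in>Hpi \<pi>. A ** h ** matrix_inv A \<in> Ortho}"

definition centralizer_GL :: "(real^'n^'n) set \<Rightarrow> (real^'n^'n) set" where
  "centralizer_GL H = {A \<in> GL. \<forall>h\<in>H. A ** h = h ** A}"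

text \<open>Orbit O(n) A of left multiplication, and right coset (Z \<inter> O(n)) A.\<close>

definition left_orbit :: "(real^'n^'n) set \<Rightarrow> real^'n^'n \<Rightarrow> (real^'n^'n) set" where
  "left_orbit G A = {Q ** A | Q. Q \<in> G}"

definition T_flat :: "((real^'n^'n) \<times> (real^'n)) set \<Rightarrow> (real^'n^'n) set set" where
  "T_flat \<pi> = left_orbit Ortho ` Cpi \<pi>"

definition quot_top :: "'a topology \<Rightarrow> ('a \<Rightarrow> 'b) \<Rightarrow> 'b topology" where
  "quot_top X f = topology (\<lambda>U. U \<subseteq> f ` topspace X \<and> openin X {x \<in> topspace X. f x \<in> U})"

lemma istopology_quot: "istopology (\<lambda>U. U \<subseteq> f ` topspace X \<and> openin X {x \<in> topspace X. f x \<in> U})"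
proof -
  have 1: "{x \<in> topspace X. f x \<in> S \<inter> T} = {x \<in> topspace X. f x \<in> S} \<inter> {x \<in> topspace X. f x \<in> T}" for S T
    by blast
  have 2: "{x \<in> topspace X. f x \<in> \<Union>K} = \<Union>((\<lambda>U. {x \<in> topspace X. f x \<in> U}) ` K)" for K
    by blast
  show ?thesis unfolding istopology_def
    apply (intro conjI allI impI)
       apply blast
      apply (simp only: 1)
      apply (intro openin_Int; blast)
     apply blast
    apply (simp only: 2)
    apply (intro openin_Union; blast)
    done
qed
lemma openin_quot_top:
  "openin (quot_top X f) U \<longleftrightarrow> U \<subseteq> f ` topspace X \<and> openin X {x \<in> topspace X. f x \<in> U}"
  unfolding quot_top_def by (simp only: topology_inverse'[OF istopology_quot])
end

theory Submission
  imports Defs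
begin

text \<open>
  Every \<open>A \<in> C\<^sub>\<pi>\<close> has a polar factorisation adapted to \<open>H\<^sub>\<pi>\<close>. Choose \<open>Q \<in> O(n)\<close> maximising
  \<open>trace (Q A)\<close> (\<open>O(n)\<close> is compact). Comparing with \<open>U Q\<close> for reflections \<open>U\<close> shows that \<open>Q A\<close> is
  symmetric positive semidefinite, so it is the unique such square root of \<open>A\<^sup>T A\<close>. For \<open>h \<in> H\<^sub>\<pi>\<close>
  the matrix \<open>h\<^sup>T Q (A h A\<^sup>-\<^sup>1)\<close> is again a maximiser, with product \<open>h\<^sup>T (Q A) h\<close>; uniqueness
  forces \<open>Q A\<close> to commute with \<open>h\<close>, i.e. \<open>Q A \<in> Z\<close>. Hence \<open>C\<^sub>\<pi> = O(n) Z\<close>, and two elements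
  \<open>A = Q B\<close> of \<open>Z\<close> in one \<open>O(n)\<close>-orbit are in one \<open>(Z \<inter> O(n))\<close>-orbit since \<open>Q = A B\<^sup>-\<^sup>1\<close>
  commutes with \<open>H\<^sub>\<pi>\<close>. Topologically, the orbit map \<open>C\<^sub>\<pi> \<rightarrow> O(n)\<setminus>C\<^sub>\<pi>\<close> restricted to the
  relatively closed set \<open>Z\<close> is a closed map because \<open>O(n)\<close> is compact; so it is a quotient map
  with the same fibres as \<open>Z \<rightarrow> (Z \<inter> O(n))\<setminus>Z\<close>, and the two quotients are homeomorphic.
\<close>

lemma invertible_matrix_inv:
  assumes "invertible (A::real^'n^'n)"
  shows "A ** matrix_inv A = mat 1" "matrix_inv A ** A = mat 1"
proof -
  have "A ** matrix_inv A = mat 1 \<and> matrix_inv A ** A = mat 1"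
    unfolding matrix_inv_def by (rule someI_ex[OF assms[unfolded invertible_def]])
  then show "A ** matrix_inv A = mat 1" "matrix_inv A ** A = mat 1" by simp_all
qed

lemma orthogonal_matrix_imp_invertible: "orthogonal_matrix (Q::real^'n^'n) \<Longrightarrow> invertible Q"
  unfolding orthogonal_matrix_def invertible_def by blast

lemma matrix_inv_unique_right:
  assumes "invertible (A::real^'n^'n)" "A ** B = mat 1"
  shows "matrix_inv A = B"
proof -
  have "matrix_inv A = (matrix_inv A ** A) ** B"
    by (simp add: assms(2) flip: matrix_mul_assoc)
  then show ?thesis by (simp add: invertible_matrix_inv(2)[OF assms(1)])
qed

lemma commute_matrix_mult:
  assumes "(P::real^'n^'n) ** h = h ** P" "R ** h = h ** R"
  shows "P ** R ** h = h ** (P ** R)"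
proof -
  have "P ** R ** h = P ** (h ** R)" by (simp add: assms(2) flip: matrix_mul_assoc)
  also have "\<dots> = h ** (P ** R)" by (simp add: assms(1) matrix_mul_assoc)
  finally show ?thesis .
qed

lemma matrix_mult_diff_left: "(A::real^'n^'n) ** (B - C) = A ** B - A ** C"
  by (simp add: vec_eq_iff matrix_matrix_mult_def algebra_simps sum_subtractf)

lemma matrix_mult_diff_right: "((B::real^'n^'n) - C) ** A = B ** A - C ** A"
  by (simp add: vec_eq_iff matrix_matrix_mult_def algebra_simps sum_subtractf)

lemma matrix_mult_add_right: "((B::real^'n^'n) + C) ** A = B ** A + C ** A"
  by (simp add: vec_eq_iff matrix_matrix_mult_def algebra_simps sum.distrib)

lemma matrix_mult_scaleR_left: "(c *\<^sub>R (A::real^'n^'n)) ** B = c *\<^sub>R (A ** B)"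
  by (simp add: scalar_matrix_assoc)

lemma matrix_mult_scaleR_right: "(A::real^'n^'n) ** (c *\<^sub>R B) = c *\<^sub>R (A ** B)"
  by (simp add: vec_eq_iff matrix_matrix_mult_def sum_distrib_left mult_ac)

lemma trace_scaleR: "trace (c *\<^sub>R (A::real^'n^'n)) = c * trace A"
  by (simp add: trace_def sum_distrib_left)

definition outer_product :: "real^'n \<Rightarrow> real^'n \<Rightarrow> real^'n^'n" where
  "outer_product x y = (\<chi> i j. x$i * y$j)"

lemma outer_product_mult: "outer_product x y ** outer_product z w = (y \<bullet> z) *\<^sub>R outer_product x w"
  by (simp add: vec_eq_iff matrix_matrix_mult_def outer_product_def inner_vec_def
      sum_distrib_left sum_distrib_right mult_ac)

lemma trace_outer_product_mult: "trace (outer_product x y ** (B::real^'n^'n)) = y \<bullet> (B *v x)"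
  unfolding trace_def matrix_matrix_mult_def outer_product_def inner_vec_def matrix_vector_mult_def
  by (simp add: sum_distrib_left mult_ac) (rule sum.swap)

lemma matrix_vector_mult_axis_nth: "((B::real^'n^'m) *v axis j 1) $ k = B$k$j"
  by (simp add: matrix_vector_mult_def axis_def if_distrib[of "\<lambda>x. _ * x"] cong: if_cong)

definition reflection_matrix :: "real^'n \<Rightarrow> real^'n^'n" where
  "reflection_matrix x = mat 1 - (2 / (x \<bullet> x)) *\<^sub>R outer_product x x"

lemma orthogonal_reflection_matrix:
  assumes "x \<noteq> 0"
  shows "orthogonal_matrix (reflection_matrix x)"
proof -
  define c where "c = 2 / (x \<bullet> x)"
  have cc: "c * (c * (x \<bullet> x)) = 2 * c" using assms by (simp add: c_def)
  have "transpose (reflection_matrix x) = reflection_matrix x"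
    by (simp add: reflection_matrix_def transpose_def vec_eq_iff outer_product_def mat_def mult_ac)
  moreover have "reflection_matrix x ** reflection_matrix x
      = mat 1 - c *\<^sub>R outer_product x x - c *\<^sub>R outer_product x x
        + (c * (c * (x \<bullet> x))) *\<^sub>R outer_product x x"
    unfolding reflection_matrix_def c_def[symmetric]
    by (simp add: matrix_mult_diff_left matrix_mult_diff_right matrix_mult_scaleR_left
        matrix_mult_scaleR_right outer_product_mult scaleR_diff_right)
  ultimately show ?thesis
    unfolding orthogonal_matrix cc by (simp add: scaleR_left_distrib[symmetric] algebra_simps)
qed

lemma trace_reflection_mult:
  "trace (reflection_matrix x ** B) = trace B - (2 / (x \<bullet> x)) * (x \<bullet> (B *v x))"
  by (simp add: reflection_matrix_def matrix_mult_diff_right matrix_mult_scaleR_left trace_sub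
      trace_scaleR trace_outer_product_mult)

lemma trace_two_reflections_mult:
  "trace (reflection_matrix x ** reflection_matrix y ** B)
     = trace B - (2 / (x \<bullet> x)) * (x \<bullet> (B *v x)) - (2 / (y \<bullet> y)) * (y \<bullet> (B *v y))
       + (2 / (x \<bullet> x)) * (2 / (y \<bullet> y)) * (x \<bullet> y) * (y \<bullet> (B *v x))"
  by (simp add: reflection_matrix_def matrix_mult_diff_right matrix_mult_diff_left
      matrix_mult_scaleR_left matrix_mult_scaleR_right outer_product_mult trace_sub trace_add
      trace_scaleR trace_outer_product_mult matrix_mult_add_right algebra_simps)

section \<open>Trace-maximal matrices\<close>

definition trace_maximal :: "real^'n^'n \<Rightarrow> bool" where
  "trace_maximal B \<longleftrightarrow> (\<forall>U. orthogonal_matrix U \<longrightarrow> trace (U ** B) \<le> trace B)"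

definition positive_semidefinite :: "real^'n^'n \<Rightarrow> bool" where
  "positive_semidefinite B \<longleftrightarrow> transpose B = B \<and> (\<forall>x. 0 \<le> x \<bullet> (B *v x))"

lemma le_0_if_le_pos_multiples:
  fixes b k :: real
  assumes "\<And>t. 0 < t \<Longrightarrow> b \<le> t * k"
  shows "b \<le> 0"
proof (rule tendsto_lowerbound)
  show "((\<lambda>t. t * k) \<longlongrightarrow> 0) (at_right 0)"
    by (intro tendsto_eq_intros) auto
  show "\<forall>\<^sub>F t in at_right 0. b \<le> t * k"
    using eventually_at_right_less by (rule eventually_mono) (rule assms)
qed simp

lemma trace_maximal_quadratic_form_nonneg:
  assumes "trace_maximal B"
  shows "0 \<le> x \<bullet> (B *v x)"
proof (cases "x = 0")
  case False
  then have "trace (reflection_matrix x ** B) \<le> trace B" and "0 < x \<bullet> x"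
    using assms orthogonal_reflection_matrix by (auto simp: trace_maximal_def)
  then show ?thesis by (simp add: trace_reflection_mult zero_le_divide_iff)
qed simp

lemma trace_maximal_entry_le:
  fixes B :: "real^'n^'n"
  assumes max: "trace_maximal B" and ij: "i \<noteq> j"
  shows "B$j$i \<le> B$i$j"
proof -
  let ?a = "B$i$i" and ?b = "B$i$j" and ?c = "B$j$i" and ?d = "B$j$j"
  have "?c - ?b \<le> t * (?a + ?d)" if t: "0 < t" for t
  proof -
    \<comment> \<open>compare \<open>B\<close> with its image under the product of the reflections in \<open>e\<^sub>i\<close> and \<open>e\<^sub>i + t e\<^sub>j\<close>\<close>
    define x :: "real^'n" where "x = axis i 1"
    define y :: "real^'n" where "y = axis i 1 + t *\<^sub>R axis j 1"
    define s where "s = 2 / (1 + t^2)"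
    have "1 + t^2 \<noteq> 0"
      by (metis add_pos_nonneg zero_less_one zero_le_power2 less_irrefl)
    then have s: "s * (1 + t^2) = 2"
      by (metis s_def nonzero_eq_divide_eq)
    have "x \<noteq> 0" by (simp add: x_def)
    moreover have "y \<noteq> 0"
      using ij by (auto simp: y_def vec_eq_iff axis_def dest: spec[of _ i])
    ultimately have "orthogonal_matrix (reflection_matrix x ** reflection_matrix y)"
      by (simp add: orthogonal_reflection_matrix orthogonal_matrix_mul)
    then have "trace (reflection_matrix x ** reflection_matrix y ** B) \<le> trace B"
      using max by (simp add: trace_maximal_def)
    moreover have "x \<bullet> x = 1" "x \<bullet> y = 1" "y \<bullet> y = 1 + t^2"
      using ij by (simp_all add: x_def y_def inner_add_left inner_add_right inner_axis_axis
          power2_eq_square)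
    moreover have "x \<bullet> (B *v x) = ?a" "y \<bullet> (B *v x) = ?a + t * ?c"
      "y \<bullet> (B *v y) = ?a + t * (?b + ?c) + t^2 * ?d"
      by (simp_all add: x_def y_def inner_add_left inner_add_right inner_axis' algebra_simps
          matrix_vector_mult_axis_nth matrix_vector_right_distrib matrix_vector_mult_scaleR power2_eq_square)
    ultimately have "(1 + t^2) * (2 * s * (?a + t * ?c) - 2 * ?a - s * (?a + t * (?b + ?c) + t^2 * ?d)) \<le> 0"
      by (simp add: trace_two_reflections_mult s_def[symmetric] add_pos_nonneg mult_nonneg_nonpos)
    also have "(1 + t^2) * (2 * s * (?a + t * ?c) - 2 * ?a - s * (?a + t * (?b + ?c) + t^2 * ?d))
        = 2 * t * ((?c - ?b) - t * (?a + ?d)) + (s * (1 + t^2) - 2) * (?a + t * (?c - ?b) - t^2 * ?d)"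
      by (simp add: algebra_simps power2_eq_square)
    finally show ?thesis using t s by (simp add: mult_le_0_iff)
  qed
  then have "?c - ?b \<le> 0" by (rule le_0_if_le_pos_multiples)
  then show ?thesis by simp
qed

lemma trace_maximal_imp_positive_semidefinite:
  assumes "trace_maximal B"
  shows "positive_semidefinite B"
proof -
  have "B$j$i = B$i$j" for i j
    using trace_maximal_entry_le[OF assms, of i j] trace_maximal_entry_le[OF assms, of j i]
    by (cases "i = j") auto
  then show ?thesis
    using trace_maximal_quadratic_form_nonneg[OF assms]
    by (simp add: positive_semidefinite_def vec_eq_iff transpose_def)
qed

lemma positive_semidefinite_kernel:
  assumes psd: "positive_semidefinite B" and x: "x \<bullet> (B *v x) = 0"
  shows "B *v x = 0"
proof -
  define y where "y = B *v x"
  have "x v* B = y"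
    using psd by (metis positive_semidefinite_def vector_transpose_matrix y_def)
  then have xy: "x \<bullet> (B *v y) = y \<bullet> y"
    by (simp flip: dot_lmul_matrix)
  have "2 * (y \<bullet> y) \<le> e * (y \<bullet> (B *v y))" if e: "0 < e" for e
  proof -
    have "0 \<le> (x - e *\<^sub>R y) \<bullet> (B *v (x - e *\<^sub>R y))"
      using psd by (simp add: positive_semidefinite_def)
    also have "\<dots> = - 2 * e * (y \<bullet> y) + e * e * (y \<bullet> (B *v y))"
      using x xy by (simp add: y_def algebra_simps)
    finally show ?thesis using e by (simp add: algebra_simps)
  qed
  then have "2 * (y \<bullet> y) \<le> 0" by (rule le_0_if_le_pos_multiples)
  then have "y \<bullet> y = 0" using inner_ge_zero[of y] by linarith
  then show ?thesis by (simp add: y_def)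
qed

lemma trace_transpose_mult_mult:
  "trace (transpose C ** (B::real^'n^'n) ** C) = (\<Sum>i\<in>UNIV. column i C \<bullet> (B *v column i C))"
  unfolding trace_def matrix_matrix_mult_def transpose_def column_def inner_vec_def
    matrix_vector_mult_def
  by (simp add: sum_distrib_left sum_distrib_right mult_ac)
    (rule sum.cong[OF refl], subst sum.swap, simp add: mult_ac)

lemma positive_semidefinite_sqrt_unique:
  fixes B1 B2 :: "real^'n^'n"
  assumes p1: "positive_semidefinite B1" and p2: "positive_semidefinite B2"
    and inv: "invertible B1" and sq: "B1 ** B1 = B2 ** B2"
  shows "B1 = B2"
proof -
  define D where "D = B1 - B2"
  have sD: "transpose D = D"
    using p1 p2 by (simp add: positive_semidefinite_def D_def vec_eq_iff transpose_def)
  have nonneg: "0 \<le> trace (transpose D ** B ** D)" if "positive_semidefinite B" for B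
    using that by (simp add: trace_transpose_mult_mult positive_semidefinite_def sum_nonneg)
  \<comment> \<open>\<open>B\<^sub>1 D + D B\<^sub>2 = 0\<close>, and its trace after multiplying by \<open>D\<close> is a sum of two nonnegative terms\<close>
  have "trace (transpose D ** B1 ** D) + trace (transpose D ** B2 ** D)
      = trace (D ** (B1 ** D + D ** B2))"
    using sD trace_mul_sym[of D "D ** B2"]
    by (simp add: matrix_add_ldistrib trace_add matrix_mul_assoc)
  also have "B1 ** D + D ** B2 = 0"
    using sq by (simp add: D_def matrix_mult_diff_left matrix_mult_diff_right)
  finally have "trace (transpose D ** B1 ** D) = 0"
    using nonneg[OF p1] nonneg[OF p2] by (simp add: trace_def)
  then have "column i D \<bullet> (B1 *v column i D) = 0" for i
    using p1 unfolding trace_transpose_mult_mult positive_semidefinite_def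
    by (subst (asm) sum_nonneg_eq_0_iff) auto
  then have "B1 *v column i D = 0" for i
    using p1 positive_semidefinite_kernel by blast
  then have "column i D = 0" for i
    using inj_matrix_vector_mult[OF inv] by (metis injD matrix_vector_mult_0_right)
  then show ?thesis by (simp add: D_def vec_eq_iff column_def)
qed

section \<open>Polar decomposition\<close>

lemma compact_Ortho: "compact (Ortho :: (real^'n^'n) set)"
proof (subst compact_eq_bounded_closed, intro conjI)
  have "norm Q \<le> real CARD('n)" if "orthogonal_matrix Q" for Q :: "real^'n^'n"
  proof -
    have "norm (Q$i) = 1" for i
      using that unfolding orthogonal_matrix_orthonormal_rows by (metis row_def vec_nth_inverse)
    moreover have "norm Q \<le> (\<Sum>i\<in>UNIV. norm (Q$i))"
      unfolding norm_vec_def by (rule L2_set_le_sum) simp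
    ultimately show ?thesis by simp
  qed
  then show "bounded (Ortho :: (real^'n^'n) set)"
    unfolding bounded_iff Ortho_def by blast
  have eq: "Ortho = (\<Inter>i. \<Inter>j. {Q::real^'n^'n. (transpose Q ** Q)$i$j = (mat 1 :: real^'n^'n)$i$j})"
    by (auto simp: Ortho_def orthogonal_matrix vec_eq_iff)
  have "continuous_on UNIV (\<lambda>Q::real^'n^'n. (transpose Q ** Q)$i$j)" for i j
    by (simp add: matrix_matrix_mult_def transpose_def) (intro continuous_intros)
  then show "closed (Ortho :: (real^'n^'n) set)"
    unfolding eq by (intro closed_INT ballI closed_Collect_eq continuous_on_const)
qed

lemma exists_orthogonal_trace_maximal: "\<exists>Q\<in>Ortho. trace_maximal (Q ** (A::real^'n^'n))"
proof -
  have "continuous_on Ortho (\<lambda>Q. trace (Q ** A))"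
    by (simp add: trace_def matrix_matrix_mult_def) (intro continuous_intros)
  moreover have "Ortho \<noteq> {}"
    using orthogonal_matrix_id by (auto simp: Ortho_def)
  ultimately obtain Q where Q: "Q \<in> Ortho" and max: "\<And>U. U \<in> Ortho \<Longrightarrow> trace (U ** A) \<le> trace (Q ** A)"
    using continuous_attains_sup[OF compact_Ortho] by blast
  have "trace (U ** (Q ** A)) \<le> trace (Q ** A)" if "orthogonal_matrix U" for U
    using max[of "U ** Q"] that Q by (simp add: Ortho_def orthogonal_matrix_mul matrix_mul_assoc)
  then show ?thesis using Q by (auto simp: trace_maximal_def)
qed

lemma trace_maximal_orbit_unique:
  fixes A :: "real^'n^'n"
  assumes inv: "invertible A" and Q1: "orthogonal_matrix Q1" and Q2: "orthogonal_matrix Q2"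
    and max1: "trace_maximal (Q1 ** A)" and max2: "trace_maximal (Q2 ** A)"
  shows "Q1 ** A = Q2 ** A"
proof (rule positive_semidefinite_sqrt_unique)
  show psd1: "positive_semidefinite (Q1 ** A)" and psd2: "positive_semidefinite (Q2 ** A)"
    using max1 max2 by (simp_all add: trace_maximal_imp_positive_semidefinite)
  show "invertible (Q1 ** A)"
    using Q1 inv by (simp add: invertible_mult orthogonal_matrix_imp_invertible)
  have "(Q ** A) ** (Q ** A) = transpose A ** A"
    if "orthogonal_matrix Q" "positive_semidefinite (Q ** A)" for Q
  proof -
    have "(Q ** A) ** (Q ** A) = transpose (Q ** A) ** (Q ** A)"
      using that(2) by (simp add: positive_semidefinite_def)
    also have "\<dots> = transpose A ** (transpose Q ** Q) ** A"
      by (simp add: matrix_transpose_mul matrix_mul_assoc)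
    finally show ?thesis using that(1) by (simp add: orthogonal_matrix)
  qed
  then show "(Q1 ** A) ** (Q1 ** A) = (Q2 ** A) ** (Q2 ** A)"
    using Q1 Q2 psd1 psd2 by simp
qed

lemma trace_maximal_orthogonal_conj:
  assumes h: "orthogonal_matrix h" and max: "trace_maximal B"
  shows "trace_maximal (transpose h ** B ** h)"
proof -
  have tr: "trace (M ** transpose h ** B ** h) = trace (h ** M ** transpose h ** B)" for M
    using trace_mul_sym[of "M ** transpose h ** B" h] by (simp add: matrix_mul_assoc)
  have "trace (transpose h ** B ** h) = trace B"
    using tr[of "mat 1"] h by (simp add: orthogonal_matrix_def)
  moreover have "trace (h ** U ** transpose h ** B) \<le> trace B" if "orthogonal_matrix U" for U
    using max that h by (simp add: trace_maximal_def orthogonal_matrix_mul matrix_mul_assoc)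
  ultimately show ?thesis
    unfolding trace_maximal_def using tr by (simp add: matrix_mul_assoc)
qed

lemma polar_factor_commuting:
  fixes A :: "real^'n^'n" and H :: "(real^'n^'n) set"
  assumes inv: "invertible A" and H: "H \<subseteq> Ortho"
    and conj: "\<forall>h\<in>H. A ** h ** matrix_inv A \<in> Ortho"
  shows "\<exists>Q\<in>Ortho. \<forall>h\<in>H. (Q ** A) ** h = h ** (Q ** A)"
proof -
  obtain Q where Q: "Q \<in> Ortho" and max: "trace_maximal (Q ** A)"
    using exists_orthogonal_trace_maximal by blast
  have "(Q ** A) ** h = h ** (Q ** A)" if "h \<in> H" for h
  proof -
    define g where "g = A ** h ** matrix_inv A"
    have h: "orthogonal_matrix h" and "orthogonal_matrix g"
      using H conj that by (auto simp: Ortho_def g_def)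
    then have Q': "orthogonal_matrix (transpose h ** Q ** g)"
      using Q by (simp add: Ortho_def orthogonal_matrix_mul)
    have "g ** A = A ** h"
      by (simp add: g_def invertible_matrix_inv(2)[OF inv] flip: matrix_mul_assoc)
    then have "(transpose h ** Q ** g) ** A = transpose h ** (Q ** A) ** h"
      by (simp flip: matrix_mul_assoc)
    moreover have "trace_maximal (transpose h ** (Q ** A) ** h)"
      using h max by (rule trace_maximal_orthogonal_conj)
    ultimately have "transpose h ** (Q ** A) ** h = Q ** A"
      using trace_maximal_orbit_unique[OF inv Q'] Q max by (simp add: Ortho_def)
    then have "h ** (transpose h ** (Q ** A) ** h) = h ** (Q ** A)" by simp
    then show ?thesis
      using h by (simp add: orthogonal_matrix_def matrix_mul_assoc)
  qed
  then show ?thesis using Q by blast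
qed

section \<open>Orbit spaces\<close>

definition orthogonal_subgroup :: "(real^'n^'n) set \<Rightarrow> bool" where
  "orthogonal_subgroup G \<longleftrightarrow> G \<subseteq> Ortho \<and> mat 1 \<in> G \<and>
     (\<forall>P\<in>G. \<forall>R\<in>G. P ** R \<in> G) \<and> (\<forall>P\<in>G. transpose P \<in> G)"

lemma orthogonal_subgroup_Ortho: "orthogonal_subgroup Ortho"
  by (simp add: orthogonal_subgroup_def Ortho_def orthogonal_matrix_id orthogonal_matrix_mul)

lemma left_orbit_eq_iff:
  assumes "orthogonal_subgroup G"
  shows "left_orbit G A = left_orbit G B \<longleftrightarrow> (\<exists>Q\<in>G. A = Q ** B)"
proof
  assume "left_orbit G A = left_orbit G B"
  moreover have "A \<in> left_orbit G A"
    using assms by (force simp: orthogonal_subgroup_def left_orbit_def)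
  ultimately show "\<exists>Q\<in>G. A = Q ** B" by (auto simp: left_orbit_def)
next
  have shift: "left_orbit G (P ** C) \<subseteq> left_orbit G C" if "P \<in> G" for P C
  proof
    fix M assume "M \<in> left_orbit G (P ** C)"
    then obtain R where "R \<in> G" "M = R ** (P ** C)" by (auto simp: left_orbit_def)
    then have "R ** P \<in> G" "M = (R ** P) ** C"
      using that assms by (simp_all add: orthogonal_subgroup_def matrix_mul_assoc)
    then show "M \<in> left_orbit G C" by (auto simp: left_orbit_def)
  qed
  assume "\<exists>Q\<in>G. A = Q ** B"
  then obtain Q where Q: "Q \<in> G" "A = Q ** B" by blast
  then have "transpose Q ** A = B" "transpose Q \<in> G"
    using assms by (auto simp: orthogonal_subgroup_def Ortho_def orthogonal_matrix matrix_mul_assoc)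
  then show "left_orbit G A = left_orbit G B"
    using shift Q by (metis subset_antisym)
qed

lemma commute_matrix_inv:
  assumes "invertible (B::real^'n^'n)" "B ** h = h ** B"
  shows "matrix_inv B ** h = h ** matrix_inv B"
proof -
  have "matrix_inv B ** h = matrix_inv B ** (h ** B) ** matrix_inv B"
    by (simp add: invertible_matrix_inv[OF assms(1)] flip: matrix_mul_assoc)
  also have "\<dots> = h ** matrix_inv B"
    by (simp add: assms(2)[symmetric] matrix_mul_assoc invertible_matrix_inv[OF assms(1)])
  finally show ?thesis .
qed

lemma orthogonal_subgroup_centralizer_Int_Ortho:
  "orthogonal_subgroup (centralizer_GL H \<inter> Ortho)"
proof -
  have Z: "P \<in> centralizer_GL H \<inter> Ortho \<longleftrightarrow> (\<forall>h\<in>H. P ** h = h ** P) \<and> orthogonal_matrix P" for P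
    by (auto simp: centralizer_GL_def GL_def Ortho_def orthogonal_matrix_imp_invertible)
  have "transpose P \<in> centralizer_GL H \<inter> Ortho" if P: "P \<in> centralizer_GL H \<inter> Ortho" for P
  proof -
    have oP: "orthogonal_matrix P" and cP: "\<forall>h\<in>H. P ** h = h ** P"
      using P Z by auto
    then have "invertible P" by (simp add: orthogonal_matrix_imp_invertible)
    moreover have "matrix_inv P = transpose P"
      using oP \<open>invertible P\<close> by (intro matrix_inv_unique_right) (simp_all add: orthogonal_matrix_def)
    ultimately show ?thesis
      unfolding Z using oP cP commute_matrix_inv[of P] by simp
  qed
  moreover have "P ** R \<in> centralizer_GL H \<inter> Ortho"
    if "P \<in> centralizer_GL H \<inter> Ortho" "R \<in> centralizer_GL H \<inter> Ortho" for P R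
    using that unfolding Z by (simp add: orthogonal_matrix_mul commute_matrix_mult)
  moreover have "mat 1 \<in> centralizer_GL H \<inter> Ortho"
    unfolding Z by (simp add: orthogonal_matrix_id)
  ultimately show ?thesis
    unfolding orthogonal_subgroup_def by blast
qed

lemma left_orbit_Ortho_eq_iff_centralizer:
  assumes A: "A \<in> centralizer_GL H" and B: "B \<in> centralizer_GL H"
  shows "left_orbit Ortho A = left_orbit Ortho B
     \<longleftrightarrow> left_orbit (centralizer_GL H \<inter> Ortho) A = left_orbit (centralizer_GL H \<inter> Ortho) B"
  unfolding left_orbit_eq_iff[OF orthogonal_subgroup_Ortho]
    left_orbit_eq_iff[OF orthogonal_subgroup_centralizer_Int_Ortho]
proof
  assume "\<exists>Q\<in>Ortho. A = Q ** B"
  then obtain Q where Q: "Q \<in> Ortho" "A = Q ** B" by blast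
  have invB: "invertible B" using B by (simp add: centralizer_GL_def GL_def)
  then have QA: "Q = A ** matrix_inv B"
    using Q(2) by (simp add: invertible_matrix_inv(1) flip: matrix_mul_assoc)
  have "Q ** h = h ** Q" if "h \<in> H" for h
    using A B that commute_matrix_inv[OF invB]
    by (simp add: QA centralizer_GL_def commute_matrix_mult)
  then have "Q \<in> centralizer_GL H"
    using Q(1) by (simp add: centralizer_GL_def GL_def Ortho_def orthogonal_matrix_imp_invertible)
  then show "\<exists>Q\<in>centralizer_GL H \<inter> Ortho. A = Q ** B" using Q by blast
qed blast

lemma closed_centralizer: "closed {M::real^'n^'n. \<forall>h\<in>H. M ** h = h ** M}"
proof -
  have "{M::real^'n^'n. \<forall>h\<in>H. M ** h = h ** M}
      = (\<Inter>h\<in>H. \<Inter>i. \<Inter>j. {M. (M ** h)$i$j = (h ** M)$i$j})"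
    by (auto simp: vec_eq_iff)
  moreover have "continuous_on UNIV (\<lambda>M::real^'n^'n. (M ** h)$i$j)"
    "continuous_on UNIV (\<lambda>M::real^'n^'n. (h ** M)$i$j)" for h i j
    by (simp_all add: matrix_matrix_mult_def) (intro continuous_intros)+
  ultimately show ?thesis by (simp add: closed_INT closed_Collect_eq)
qed

lemma closed_Ortho_orbit_set:
  fixes K :: "(real^'n^'n) set"
  assumes "closed K"
  shows "closed {Q ** M | Q M. Q \<in> Ortho \<and> M \<in> K}"
proof -
  define f where "f p = transpose (fst p) ** snd p" for p :: "(real^'n^'n) \<times> (real^'n^'n)"
  have "continuous_on UNIV f"
    unfolding f_def by (simp add: matrix_matrix_mult_def transpose_def) (intro continuous_intros)
  then have "closed (f -` K)"
    using assms continuous_on_closed_vimage[of UNIV f] by simp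
  then have "closedin (top_of_set (Ortho \<times> UNIV)) ((Ortho \<times> UNIV) \<inter> f -` K)"
    by (rule closedin_closed_Int)
  from closedin_compact_projection[OF compact_Ortho this]
  have "closed {A. \<exists>Q. Q \<in> Ortho \<and> transpose Q ** A \<in> K}"
    by (simp add: f_def)
  moreover have "{A. \<exists>Q. Q \<in> Ortho \<and> transpose Q ** A \<in> K} = {Q ** M | Q M. Q \<in> Ortho \<and> M \<in> K}"
  proof (intro set_eqI iffI)
    fix A assume "A \<in> {A. \<exists>Q. Q \<in> Ortho \<and> transpose Q ** A \<in> K}"
    then obtain Q where Q: "Q \<in> Ortho" "transpose Q ** A \<in> K" by blast
    moreover have "A = Q ** (transpose Q ** A)"
      using Q by (simp add: Ortho_def orthogonal_matrix_def matrix_mul_assoc)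
    ultimately show "A \<in> {Q ** M | Q M. Q \<in> Ortho \<and> M \<in> K}" by blast
  next
    fix A assume "A \<in> {Q ** M | Q M. Q \<in> Ortho \<and> M \<in> K}"
    then obtain Q M where QM: "Q \<in> Ortho" "M \<in> K" "A = Q ** M" by blast
    then have "transpose Q ** A = M"
      by (simp add: Ortho_def orthogonal_matrix matrix_mul_assoc)
    with QM show "A \<in> {A. \<exists>Q. Q \<in> Ortho \<and> transpose Q ** A \<in> K}" by auto
  qed
  ultimately show ?thesis by simp
qed

lemma topspace_quot_top: "topspace (quot_top X f) = f ` topspace X"
proof
  show "topspace (quot_top X f) \<subseteq> f ` topspace X"
    using openin_topspace[of "quot_top X f"] unfolding openin_quot_top by blast
  have "{x \<in> topspace X. f x \<in> f ` topspace X} = topspace X" by blast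
  then have "openin (quot_top X f) (f ` topspace X)"
    by (simp add: openin_quot_top)
  then show "f ` topspace X \<subseteq> topspace (quot_top X f)" by (rule openin_subset)
qed

lemma quotient_map_quot_top: "quotient_map X (quot_top X f) f"
  unfolding quotient_map_def topspace_quot_top openin_quot_top by auto

lemma quotient_maps_same_fibres_homeomorphic:
  assumes f: "quotient_map X Y f" and g: "quotient_map X Y' g"
    and fibres: "\<And>x y. x \<in> topspace X \<Longrightarrow> y \<in> topspace X \<Longrightarrow> f x = f y \<longleftrightarrow> g x = g y"
  obtains \<phi> where "\<And>x. x \<in> topspace X \<Longrightarrow> \<phi> (f x) = g x" and "homeomorphic_map Y Y' \<phi>"
proof
  define \<phi> where "\<phi> y = g (SOME x. x \<in> topspace X \<and> f x = y)" for y
  show \<phi>: "\<phi> (f x) = g x" if "x \<in> topspace X" for x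
  proof -
    have "\<exists>x'. x' \<in> topspace X \<and> f x' = f x" using that by blast
    then show ?thesis
      unfolding \<phi>_def by (rule someI2_ex) (use fibres that in blast)
  qed
  have "quotient_map X Y' (\<phi> \<circ> f)"
    using g \<phi> by (simp add: quotient_map_eq)
  then have "quotient_map Y Y' \<phi>"
    using f quotient_map_compose_eq by blast
  moreover have "inj_on \<phi> (topspace Y)"
  proof (rule inj_onI)
    fix y y' assume y: "y \<in> topspace Y" "y' \<in> topspace Y" and eq: "\<phi> y = \<phi> y'"
    obtain x x' where "x \<in> topspace X" "x' \<in> topspace X" "y = f x" "y' = f x'"
      using y quotient_imp_surjective_map[OF f] by blast
    then show "y = y'"
      using eq \<phi> fibres by simp
  qed
  ultimately show "homeomorphic_map Y Y' \<phi>"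
    by (simp add: homeomorphic_map_def)
qed

lemma quotient_map_Ortho_orbits_restrict:
  fixes Z C :: "(real^'n^'n) set"
  assumes Z: "closedin (top_of_set C) Z"
    and invariant: "\<And>Q A. Q \<in> Ortho \<Longrightarrow> A \<in> C \<Longrightarrow> Q ** A \<in> C"
    and decomp: "\<forall>A\<in>C. \<exists>Q\<in>Ortho. \<exists>B\<in>Z. A = Q ** B"
  shows "quotient_map (top_of_set Z) (quot_top (top_of_set C) (left_orbit Ortho)) (left_orbit Ortho)"
proof (rule continuous_closed_imp_quotient_map)
  let ?Y = "quot_top (top_of_set C) (left_orbit Ortho)"
  have "Z \<subseteq> C" using Z closedin_imp_subset by auto
  have same_orbit: "left_orbit Ortho A \<in> left_orbit Ortho ` F \<longleftrightarrow> (\<exists>Q\<in>Ortho. \<exists>B\<in>F. A = Q ** B)"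
    for A and F :: "(real^'n^'n) set"
    unfolding image_iff left_orbit_eq_iff[OF orthogonal_subgroup_Ortho] by blast
  show "continuous_map (top_of_set Z) ?Y (left_orbit Ortho)"
    using quotient_imp_continuous_map[OF quotient_map_quot_top] \<open>Z \<subseteq> C\<close>
    by (rule continuous_map_from_subtopology_mono)
  show "left_orbit Ortho ` topspace (top_of_set Z) = topspace ?Y"
    using decomp \<open>Z \<subseteq> C\<close> same_orbit by (auto simp: topspace_quot_top)
  show "closed_map (top_of_set Z) ?Y (left_orbit Ortho)"
    unfolding closed_map_def
  proof (intro allI impI)
    fix F assume "closedin (top_of_set Z) F"
    then obtain K where K: "closed K" "F = C \<inter> K"
      using Z closedin_trans closedin_closed by metis
    \<comment> \<open>the saturation of \<open>F\<close> in \<open>C\<close> is \<open>C \<inter> O(n) K\<close>, because \<open>C\<close> is \<open>O(n)\<close>-invariant\<close>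
    have "{A \<in> C. left_orbit Ortho A \<in> left_orbit Ortho ` F} = C \<inter> {Q ** M | Q M. Q \<in> Ortho \<and> M \<in> K}"
    proof -
      have "M \<in> C" if "Q \<in> Ortho" "Q ** M \<in> C" for Q M
        using invariant[of "transpose Q" "Q ** M"] that
        by (simp add: Ortho_def orthogonal_matrix_def matrix_mul_assoc)
      then show ?thesis by (auto simp: same_orbit K(2))
    qed
    then have "closedin (top_of_set C) {A \<in> C. left_orbit Ortho A \<in> left_orbit Ortho ` F}"
      using closed_Ortho_orbit_set[OF K(1)] by (simp add: closedin_closed_Int)
    moreover have "left_orbit Ortho ` F \<subseteq> topspace ?Y"
      using K(2) by (auto simp: topspace_quot_top)
    ultimately show "closedin ?Y (left_orbit Ortho ` F)"
      using quotient_map_quot_top[of "top_of_set C" "left_orbit Ortho"]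
      unfolding quotient_map_closedin by simp
  qed
qed

lemma Hpi_subset_Ortho: "crystallographic \<pi> \<Longrightarrow> Hpi \<pi> \<subseteq> Ortho"
  by (auto simp: crystallographic_def iso_subgroup_def Hpi_def Iso_def Ortho_def)

lemma centralizer_subset_Cpi:
  assumes "Hpi \<pi> \<subseteq> Ortho"
  shows "centralizer_GL (Hpi \<pi>) \<subseteq> Cpi \<pi>"
proof
  fix A assume A: "A \<in> centralizer_GL (Hpi \<pi>)"
  then have "A ** h ** matrix_inv A = h" if "h \<in> Hpi \<pi>" for h
    using that by (simp add: centralizer_GL_def GL_def invertible_matrix_inv flip: matrix_mul_assoc)
  then show "A \<in> Cpi \<pi>"
    using A assms by (auto simp: Cpi_def centralizer_GL_def)
qed

lemma Cpi_Ortho_mult: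
  assumes Q: "Q \<in> Ortho" and A: "A \<in> Cpi \<pi>"
  shows "Q ** A \<in> Cpi \<pi>"
proof -
  have invA: "invertible A" and conj: "\<forall>h\<in>Hpi \<pi>. A ** h ** matrix_inv A \<in> Ortho"
    using A by (auto simp: Cpi_def GL_def)
  have oQ: "orthogonal_matrix Q" using Q by (simp add: Ortho_def)
  then have invQA: "invertible (Q ** A)"
    using invA by (simp add: invertible_mult orthogonal_matrix_imp_invertible)
  have "(Q ** A) ** (matrix_inv A ** transpose Q) = Q ** (A ** matrix_inv A) ** transpose Q"
    by (simp add: matrix_mul_assoc)
  then have "(Q ** A) ** (matrix_inv A ** transpose Q) = mat 1"
    using oQ invA by (simp add: invertible_matrix_inv orthogonal_matrix_def)
  then have "matrix_inv (Q ** A) = matrix_inv A ** transpose Q"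
    by (rule matrix_inv_unique_right[OF invQA])
  then have "(Q ** A) ** h ** matrix_inv (Q ** A) = Q ** (A ** h ** matrix_inv A) ** transpose Q" for h
    by (simp add: matrix_mul_assoc)
  then show ?thesis
    using conj oQ invQA
    by (simp add: Cpi_def GL_def Ortho_def orthogonal_matrix_mul)
qed

lemma Cpi_decomposition:
  assumes "Hpi \<pi> \<subseteq> Ortho" and A: "A \<in> Cpi \<pi>"
  shows "\<exists>Q\<in>Ortho. \<exists>B\<in>centralizer_GL (Hpi \<pi>). A = Q ** B"
proof -
  have invA: "invertible A" using A by (simp add: Cpi_def GL_def)
  obtain Q where Q: "Q \<in> Ortho" and comm: "\<forall>h\<in>Hpi \<pi>. (Q ** A) ** h = h ** (Q ** A)"
    using polar_factor_commuting[OF invA assms(1)] A by (auto simp: Cpi_def)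
  then have "Q ** A \<in> centralizer_GL (Hpi \<pi>)"
    using invA by (simp add: centralizer_GL_def GL_def Ortho_def invertible_mult
        orthogonal_matrix_imp_invertible)
  moreover have "A = transpose Q ** (Q ** A)" and "transpose Q \<in> Ortho"
    using Q by (simp_all add: Ortho_def matrix_mul_assoc orthogonal_matrix_def)
  ultimately show ?thesis by blast
qed

lemma closedin_centralizer_Cpi:
  assumes "Hpi \<pi> \<subseteq> Ortho"
  shows "closedin (top_of_set (Cpi \<pi>)) (centralizer_GL (Hpi \<pi>))"
proof -
  have "centralizer_GL (Hpi \<pi>) = Cpi \<pi> \<inter> {M. \<forall>h\<in>Hpi \<pi>. M ** h = h ** M}"
    using centralizer_subset_Cpi[OF assms] by (auto simp: centralizer_GL_def Cpi_def)
  then show ?thesis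
    by (simp add: closedin_closed_Int closed_centralizer)
qed

theorem mainTheorem11:
  fixes \<pi> :: "((real^'n^'n) \<times> (real^'n)) set"
  assumes "crystallographic \<pi>"
  defines "Z \<equiv> centralizer_GL (Hpi \<pi>)"
  shows "Z \<subseteq> Cpi \<pi>
    \<and> (\<forall>A\<in>Cpi \<pi>. \<exists>Q\<in>Ortho. \<exists>B\<in>Z. A = Q ** B)
    \<and> (\<forall>A\<in>Z. \<forall>B\<in>Z. (left_orbit Ortho A = left_orbit Ortho B
                      \<longleftrightarrow> left_orbit (Z \<inter> Ortho) A = left_orbit (Z \<inter> Ortho) B))
    \<and> (\<exists>\<phi>. (\<forall>B\<in>Z. \<phi> (left_orbit (Z \<inter> Ortho) B) = left_orbit Ortho B)
           \<and> homeomorphic_map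
               (quot_top (subtopology euclidean Z) (left_orbit (Z \<inter> Ortho)))
               (quot_top (subtopology euclidean (Cpi \<pi>)) (left_orbit Ortho)) \<phi>)"
proof -
  have H: "Hpi \<pi> \<subseteq> Ortho" using assms(1) by (rule Hpi_subset_Ortho)
  have decomp: "\<forall>A\<in>Cpi \<pi>. \<exists>Q\<in>Ortho. \<exists>B\<in>Z. A = Q ** B"
    using Cpi_decomposition[OF H] by (simp add: Z_def)
  have orbits: "\<forall>A\<in>Z. \<forall>B\<in>Z. (left_orbit Ortho A = left_orbit Ortho B
      \<longleftrightarrow> left_orbit (Z \<inter> Ortho) A = left_orbit (Z \<inter> Ortho) B)"
    unfolding Z_def using left_orbit_Ortho_eq_iff_centralizer by blast
  have quotient: "quotient_map (top_of_set Z) (quot_top (top_of_set (Cpi \<pi>)) (left_orbit Ortho))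
      (left_orbit Ortho)"
    using closedin_centralizer_Cpi[OF H] Cpi_Ortho_mult decomp
    unfolding Z_def by (rule quotient_map_Ortho_orbits_restrict)
  have fibres: "left_orbit (Z \<inter> Ortho) A = left_orbit (Z \<inter> Ortho) B \<longleftrightarrow> left_orbit Ortho A = left_orbit Ortho B"
    if "A \<in> topspace (top_of_set Z)" "B \<in> topspace (top_of_set Z)" for A B
    using orbits that by simp
  obtain \<phi> where "\<And>B. B \<in> topspace (top_of_set Z) \<Longrightarrow> \<phi> (left_orbit (Z \<inter> Ortho) B) = left_orbit Ortho B"
    and "homeomorphic_map (quot_top (top_of_set Z) (left_orbit (Z \<inter> Ortho)))
           (quot_top (top_of_set (Cpi \<pi>)) (left_orbit Ortho)) \<phi>"
    using quotient_maps_same_fibres_homeomorphic[OF quotient_map_quot_top quotient fibres] by blast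
  then show ?thesis
    using centralizer_subset_Cpi[OF H] decomp orbits by (auto simp: Z_def)
qed

end
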